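(* Let $X=\mathrm{Cay}(G,S)$ be a Cayley graph of a group $G$ with respect to a finite generating set $S$, and let $B_X(n)$ be the ball of radius $n$ around the identity. Suppose there are real numbers $r>0$ and $s$ such that $|B_X(n)|<r^{n^{s}}$ for every positive integer $n$. Then $\mathrm{epdim}(G)\leq s$.
   Context: For a group $G$, $\mathcal M(G)$ denotes the set of symmetric probability measures $\mu$ on $G$ ($\mu(g)=\mu(g^{-1})$). For $\mu\in\mathcal M(G)$ and $\lambda>0$, $G^\mu(\lambda)$ is the random multigraph with vertex set $G$ in which the number of parallel edges between distinct $g,h$ is an independent Poisson random variable with mean $\lambda\mu(g^{-1}h)$; $\lambda_c(\mu):=\sup\{\lambda : \Pr(G^\mu(\lambda)\text{ has an infinite component})=0\}$ (always $\lambda_c(\mu)\ge1$). Fix a finite generating set and let $|g|$ be the word length. For $r\in(0,1)$ and $s\in(0,1]$ let ${}_e\mathcal M_s^r(G):=\{\mu\in\mathcal M(G) : \mu(g)<r^{|g|^s}\ \forall g\in G\}$. The exponential percolation dimension is $\mathrm{epdim}(G):=\sup\{s : \exists r\in(0,1) \text{ such that } \inf_{\mu\in{}_e\mathcal M_s^r(G)}\lambda_c(\mu)=1\}$, i.e. the supremum of those $s$ for which, for some $r$, there is a sequence $\mu_i\in{}_e\mathcal M_s^r(G)$ with $\lambda_c(\mu_i)\to1$. It does not depend on the choice of generating set. *)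

theory Defs
  imports "HOL-Probability.Probability"
begin

text \<open>Groups are modelled by the type class group_add (not necessarily commutative);
  the group G is the whole type, written additively: g^{-1} h is (- g + h).\<close>

definition generates :: "'a::group_add set \<Rightarrow> bool" where
  "generates S \<longleftrightarrow> (\<forall>g. \<exists>xs. set xs \<subseteq> S \<union> uminus ` S \<and> sum_list xs = g)"

definition word_length :: "'a::group_add set \<Rightarrow> 'a \<Rightarrow> nat" where
  "word_length S g = (LEAST n. \<exists>xs. length xs = n \<and> set xs \<subseteq> S \<union> uminus ` S \<and> sum_list xs = g)"

definition ball_X :: "'a::group_add set \<Rightarrow> nat \<Rightarrow> 'a set" where
  "ball_X S n = {g. word_length S g \<le> n}"

definition sym_measures :: "'a::group_add pmf set" where
  "sym_measures = {\<mu>. \<forall>g. pmf \<mu> g = pmf \<mu> (- g)}"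

definition poisson :: "real \<Rightarrow> nat pmf" where
  "poisson c = (if c = 0 then return_pmf 0 else poisson_pmf c)"

definition pairs :: "'a set set" where
  "pairs = {{g, h} | g h. g \<noteq> h}"

text \<open>mu(g^{-1} h) for the edge e = {g,h} (well defined for symmetric mu).\<close>
definition edge_weight :: "'a::group_add pmf \<Rightarrow> 'a set \<Rightarrow> real" where
  "edge_weight \<mu> e = (let g = (SOME g. g \<in> e); h = (SOME h. h \<in> e \<and> h \<noteq> g) in pmf \<mu> (- g + h))"

text \<open>The random multigraph G^mu(lambda): omega e is the number of parallel edges on e.\<close>
definition multigraph_space :: "'a::group_add pmf \<Rightarrow> real \<Rightarrow> ('a set \<Rightarrow> nat) measure" where
  "multigraph_space \<mu> t = PiM pairs (\<lambda>e. measure_pmf (poisson (t * edge_weight \<mu> e)))"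

definition adjacent :: "('a set \<Rightarrow> nat) \<Rightarrow> ('a \<times> 'a) set" where
  "adjacent \<omega> = {(g, h). g \<noteq> h \<and> \<omega> {g, h} > 0}"

definition has_infinite_component :: "('a set \<Rightarrow> nat) \<Rightarrow> bool" where
  "has_infinite_component \<omega> \<longleftrightarrow> (\<exists>g. infinite {h. (g, h) \<in> (adjacent \<omega>)\<^sup>*})"

definition lambda_c :: "'a::group_add pmf \<Rightarrow> ereal" where
  "lambda_c \<mu> = Sup (ereal ` {t. t > 0 \<and>
      measure (multigraph_space \<mu> t)
        {\<omega> \<in> space (multigraph_space \<mu> t). has_infinite_component \<omega>} = 0})"

definition exp_measures :: "'a::group_add set \<Rightarrow> real \<Rightarrow> real \<Rightarrow> 'a pmf set" where
  "exp_measures S s r = {\<mu> \<in> sym_measures.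
      \<forall>g. pmf \<mu> g < r powr (real (word_length S g) powr s)}"

definition epdim :: "'a::group_add set \<Rightarrow> ereal" where
  "epdim S = Sup (ereal ` {s. 0 < s \<and> s \<le> 1 \<and>
      (\<exists>r. 0 < r \<and> r < 1 \<and> (INF \<mu>\<in>exp_measures S s r. lambda_c \<mu>) = 1)})"

end

theory Submission
  imports Defs "HOL-Real_Asymp.Real_Asymp" "HOL-Library.Transitive_Closure_Table"
begin

text \<open>
  An edge with increment \<open>x\<close> is open with probability \<open>1 - exp (-t \<mu>(x))\<close>, independently of
  the other edges, so the expected number of open self-avoiding walks of length \<open>k\<close> from a vertex
  is at most \<open>Q\<^sup>k\<close>, where \<open>Q = \<Sum>\<^sub>x (1 - exp (-t \<mu>(x)))\<close>. If \<open>Q < 1\<close>, almost surely every vertex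
  starts only finitely many open self-avoiding walks, so there is no infinite component.
  Since \<open>1 - exp (-a) \<le> a - a\<^sup>2/4\<close> for \<open>0 \<le> a \<le> 2\<close>, we have \<open>Q \<le> t - \<Sum>\<^sub>x\<^sub>\<in>\<^sub>B \<mu>(x)\<^sup>2/4\<close>, and
  Cauchy-Schwarz gives \<open>\<lambda>\<^sub>c(\<mu>) \<ge> 1 + \<mu>(B)\<^sup>2/(8|B|)\<close> for every finite \<open>B\<close>.
  If \<open>s < s'\<close>, the growth bound makes \<open>\<Sum>\<^sub>n |B(n)| r'^(n^s')\<close> converge, so all measures with
  \<open>\<mu>(g) < r'^(|g|^s')\<close> give mass at least \<open>1/2\<close> to one fixed ball \<open>B(N)\<close>. Their critical
  intensities then stay above \<open>1 + 1/(32|B(N)|)\<close>, so \<open>s'\<close> does not count towards the dimension.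
\<close>

section \<open>Word length and balls\<close>

lemma word_length_witness:
  assumes "generates S"
  obtains xs where "length xs = word_length S g" "set xs \<subseteq> S \<union> uminus ` S" "sum_list xs = g"
proof -
  from assms obtain xs where "set xs \<subseteq> S \<union> uminus ` S \<and> sum_list xs = g"
    unfolding generates_def by blast
  then have "\<exists>n xs. length xs = n \<and> set xs \<subseteq> S \<union> uminus ` S \<and> sum_list xs = g" by blast
  then have "\<exists>xs. length xs = word_length S g \<and> set xs \<subseteq> S \<union> uminus ` S \<and> sum_list xs = g"
    unfolding word_length_def by (rule LeastI_ex)
  with that show ?thesis by blast
qed

lemma word_length_le:
  "set xs \<subseteq> S \<union> uminus ` S \<Longrightarrow> sum_list xs = g \<Longrightarrow> word_length S g \<le> length xs"
  unfolding word_length_def by (rule Least_le) blast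

lemma zero_in_ball_X: "(0::'a::group_add) \<in> ball_X S n"
  using word_length_le[of "[]" S 0] unfolding ball_X_def by simp

lemma finite_ball_X:
  assumes "finite S" "generates S"
  shows "finite (ball_X S n)"
proof -
  have "ball_X S n \<subseteq> sum_list ` {xs. set xs \<subseteq> S \<union> uminus ` S \<and> length xs \<le> n}"
  proof
    fix g assume "g \<in> ball_X S n"
    moreover obtain xs where "length xs = word_length S g" "set xs \<subseteq> S \<union> uminus ` S" "sum_list xs = g"
      using word_length_witness[OF assms(2)] .
    ultimately show "g \<in> sum_list ` {xs. set xs \<subseteq> S \<union> uminus ` S \<and> length xs \<le> n}"
      unfolding ball_X_def by force
  qed
  moreover have "finite {xs. set xs \<subseteq> S \<union> uminus ` S \<and> length xs \<le> n}"
    using finite_lists_length_le[of "S \<union> uminus ` S" n] assms(1) by simp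
  ultimately show ?thesis by (meson finite_imageI finite_subset)
qed

lemma card_ball_X_pos: "finite S \<Longrightarrow> generates S \<Longrightarrow> 0 < card (ball_X S n)"
  using finite_ball_X zero_in_ball_X card_gt_0_iff by blast

lemma countable_UNIV_if_generates:
  fixes S :: "'a::group_add set"
  assumes "finite S" "generates S"
  shows "countable (UNIV :: 'a set)"
proof -
  have "UNIV \<subseteq> sum_list ` lists (S \<union> uminus ` S)"
  proof
    fix g :: 'a
    obtain xs where "set xs \<subseteq> S \<union> uminus ` S" "sum_list xs = g"
      using assms(2) unfolding generates_def by blast
    then show "g \<in> sum_list ` lists (S \<union> uminus ` S)" by auto
  qed
  moreover have "countable (sum_list ` lists (S \<union> uminus ` S))"
    using assms(1) by (intro countable_image countable_lists countable_finite) simp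
  ultimately show ?thesis by (rule countable_subset)
qed

section \<open>Open walks in the random multigraph\<close>

definition edge_law :: "'a::group_add pmf \<Rightarrow> real \<Rightarrow> 'a set \<Rightarrow> nat measure" where
  "edge_law \<mu> t e = measure_pmf (poisson (t * edge_weight \<mu> e))"

lemma multigraph_space_eq_PiM: "multigraph_space \<mu> t = Pi\<^sub>M pairs (edge_law \<mu> t)"
  unfolding multigraph_space_def edge_law_def by simp

definition open_prob :: "'a::group_add pmf \<Rightarrow> real \<Rightarrow> 'a \<Rightarrow> real" where
  "open_prob \<mu> t x = 1 - exp (- (t * pmf \<mu> x))"

lemma open_prob_nonneg: "0 \<le> t \<Longrightarrow> 0 \<le> open_prob \<mu> t x"
  unfolding open_prob_def by simp

lemma edge_weight_doubleton:
  assumes sym: "\<mu> \<in> sym_measures" and "g \<noteq> h"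
  shows "edge_weight \<mu> {g, h} = pmf \<mu> (- g + h)"
proof -
  define a where "a = (SOME x. x \<in> {g, h})"
  have a: "a \<in> {g, h}" unfolding a_def by (rule someI[of _ g]) simp
  define b where "b = (SOME y. y \<in> {g, h} \<and> y \<noteq> a)"
  have "\<exists>y. y \<in> {g, h} \<and> y \<noteq> a" using a \<open>g \<noteq> h\<close> by blast
  then have b: "b \<in> {g, h} \<and> b \<noteq> a" unfolding b_def by (rule someI_ex)
  have weight: "edge_weight \<mu> {g, h} = pmf \<mu> (- a + b)"
    unfolding edge_weight_def Let_def a_def b_def by (rule refl)
  have "pmf \<mu> (- g + h) = pmf \<mu> (- (- g + h))"
    using sym unfolding sym_measures_def by blast
  also have "\<dots> = pmf \<mu> (- h + g)"
    by (simp add: minus_add)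
  finally have swap: "pmf \<mu> (- g + h) = pmf \<mu> (- h + g)" .
  have "a = g \<and> b = h \<or> a = h \<and> b = g"
    using a b by blast
  then show ?thesis
    using weight swap by auto
qed

lemma emeasure_poisson_pos:
  assumes "0 \<le> c"
  shows "emeasure (measure_pmf (poisson c)) {0<..} = ennreal (1 - exp (- c))"
proof (cases "c = 0")
  case True
  then show ?thesis by (simp add: poisson_def)
next
  case False
  have "{0<..} = UNIV - {0::nat}" by auto
  then have "measure_pmf.prob (poisson c) {0<..} = 1 - pmf (poisson c) 0"
    using measure_pmf.prob_compl[of "{0::nat}" "poisson c"] by (simp add: measure_pmf_single)
  also have "pmf (poisson c) 0 = exp (- c)"
    using assms False by (simp add: poisson_def pmf_poisson)
  finally show ?thesis by (simp add: measure_pmf.emeasure_eq_measure)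
qed

fun walk_edges :: "'a \<Rightarrow> 'a list \<Rightarrow> 'a set set" where
  "walk_edges g [] = {}"
| "walk_edges g (w # ws) = insert {g, w} (walk_edges w ws)"

fun walk_open_prob :: "'a::group_add pmf \<Rightarrow> real \<Rightarrow> 'a \<Rightarrow> 'a list \<Rightarrow> real" where
  "walk_open_prob \<mu> t g [] = 1"
| "walk_open_prob \<mu> t g (w # ws) = open_prob \<mu> t (- g + w) * walk_open_prob \<mu> t w ws"

text \<open>Intersecting with \<open>pairs\<close> keeps the event measurable also for walks that are not self-avoiding.\<close>
definition walk_open_event :: "'a::group_add pmf \<Rightarrow> real \<Rightarrow> 'a \<Rightarrow> 'a list \<Rightarrow> ('a set \<Rightarrow> nat) set" where
  "walk_open_event \<mu> t g ws = prod_emb pairs (edge_law \<mu> t) (walk_edges g ws \<inter> pairs)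
      (Pi\<^sub>E (walk_edges g ws \<inter> pairs) (\<lambda>_. {0<..}))"

lemma walk_open_prob_nonneg: "0 \<le> t \<Longrightarrow> 0 \<le> walk_open_prob \<mu> t g ws"
  by (induction ws arbitrary: g) (auto simp: open_prob_nonneg)

lemma finite_walk_edges: "finite (walk_edges g ws)"
  by (induction ws arbitrary: g) auto

lemma walk_edges_subset: "e \<in> walk_edges g ws \<Longrightarrow> e \<subseteq> set (g # ws)"
  by (induction ws arbitrary: g) auto

lemma walk_edges_subset_pairs: "distinct (g # ws) \<Longrightarrow> walk_edges g ws \<subseteq> pairs"
  by (induction ws arbitrary: g) (auto simp: pairs_def)

lemma prod_emeasure_walk_edges_open:
  assumes sym: "\<mu> \<in> sym_measures" and t: "0 \<le> t"
  shows "distinct (g # ws) \<Longrightarrow>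
    (\<Prod>e\<in>walk_edges g ws. emeasure (edge_law \<mu> t e) {0<..}) = ennreal (walk_open_prob \<mu> t g ws)"
proof (induction ws arbitrary: g)
  case Nil
  then show ?case by simp
next
  case (Cons w ws)
  have "{g, w} \<notin> walk_edges w ws"
    using Cons.prems walk_edges_subset[of "{g, w}" w ws] by auto
  moreover have "emeasure (edge_law \<mu> t {g, w}) {0<..} = ennreal (open_prob \<mu> t (- g + w))"
    using Cons.prems t edge_weight_doubleton[OF sym, of g w]
    by (simp add: edge_law_def open_prob_def emeasure_poisson_pos)
  ultimately show ?case
    using Cons finite_walk_edges[of w ws]
    by (simp add: ennreal_mult open_prob_nonneg walk_open_prob_nonneg t)
qed

lemma walk_open_event_sets: "walk_open_event \<mu> t g ws \<in> sets (multigraph_space \<mu> t)"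
  unfolding walk_open_event_def multigraph_space_eq_PiM
  by (rule sets_PiM_I) (simp_all add: finite_walk_edges edge_law_def)

lemma emeasure_walk_open_event:
  assumes "\<mu> \<in> sym_measures" "0 \<le> t" "distinct (g # ws)"
  shows "emeasure (multigraph_space \<mu> t) (walk_open_event \<mu> t g ws) = ennreal (walk_open_prob \<mu> t g ws)"
proof -
  have "emeasure (multigraph_space \<mu> t) (walk_open_event \<mu> t g ws)
      = (\<Prod>e\<in>walk_edges g ws \<inter> pairs. emeasure (edge_law \<mu> t e) {0<..})"
    unfolding walk_open_event_def multigraph_space_eq_PiM
    by (rule emeasure_PiM_emb) (simp_all add: finite_walk_edges edge_law_def prob_space_measure_pmf)
  also have "walk_edges g ws \<inter> pairs = walk_edges g ws"
    using walk_edges_subset_pairs[OF assms(3)] by blast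
  finally show ?thesis
    using prod_emeasure_walk_edges_open[OF assms] by simp
qed

lemma walk_open_event_if_path:
  assumes "\<omega> \<in> space (multigraph_space \<mu> t)"
    and path: "rtrancl_path (\<lambda>a b. (a, b) \<in> adjacent \<omega>) g ws h"
  shows "\<omega> \<in> walk_open_event \<mu> t g ws"
proof -
  have "0 < \<omega> e" if "e \<in> walk_edges g ws" for e
    using path that by (induction rule: rtrancl_path.induct) (auto simp: adjacent_def)
  then show ?thesis
    using assms(1) by (simp add: walk_open_event_def prod_emb_def multigraph_space_eq_PiM
        space_PiM restrict_PiE_iff)
qed

section \<open>Expected number of open self-avoiding walks\<close>

lemma nn_integral_count_space_translate:
  fixes f :: "'a::group_add \<Rightarrow> ennreal"
  shows "(\<integral>\<^sup>+ w. f (- g + w) \<partial>count_space UNIV) = (\<integral>\<^sup>+ x. f x \<partial>count_space UNIV)"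
proof (rule nn_integral_bij_count_space)
  show "bij_betw (\<lambda>w. - g + w) UNIV UNIV"
    by (rule bij_betwI[where g = "\<lambda>x. g + x"]) (auto simp: add.assoc[symmetric])
qed

lemma nn_integral_walk_open_prob_length:
  assumes t: "0 \<le> t"
  shows "(\<integral>\<^sup>+ ws. ennreal (walk_open_prob \<mu> t g ws) * indicator {ws. length ws = k} ws \<partial>count_space UNIV)
      = (\<integral>\<^sup>+ x. ennreal (open_prob \<mu> t x) \<partial>count_space UNIV) ^ k"
proof (induction k arbitrary: g)
  case 0
  have "(\<lambda>ws. ennreal (walk_open_prob \<mu> t g ws) * indicator {ws. length ws = 0} ws) = indicator {[]}"
    by (auto simp: indicator_def fun_eq_iff)
  then show ?case by simp
next
  case (Suc k)
  let ?Q = "\<integral>\<^sup>+ x. ennreal (open_prob \<mu> t x) \<partial>count_space UNIV"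
  define f where "f ws = ennreal (walk_open_prob \<mu> t g ws) * indicator {ws. length ws = Suc k} ws" for ws
  have "(\<integral>\<^sup>+ ws. f ws \<partial>count_space UNIV) = (\<integral>\<^sup>+ ws. f ws \<partial>count_space (UNIV - {[]}))"
    by (rule nn_integral_count_space_eq) (auto simp: f_def)
  also have "\<dots> = (\<integral>\<^sup>+ p. f (fst p # snd p) \<partial>count_space UNIV)"
  proof (rule nn_integral_bij_count_space[symmetric])
    show "bij_betw (\<lambda>p. fst p # snd p) UNIV (UNIV - {[]})"
      by (rule bij_betwI[where g = "\<lambda>xs. (hd xs, tl xs)"]) auto
  qed
  also have "\<dots> = (\<integral>\<^sup>+ w. \<integral>\<^sup>+ vs. f (w # vs) \<partial>count_space UNIV \<partial>count_space UNIV)"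
    using nn_integral_fst_count_space[of "\<lambda>p. f (fst p # snd p)"] by simp
  also have "\<dots> = (\<integral>\<^sup>+ w. ennreal (open_prob \<mu> t (- g + w)) * ?Q ^ k \<partial>count_space UNIV)"
  proof (rule nn_integral_cong)
    fix w
    have "(\<integral>\<^sup>+ vs. f (w # vs) \<partial>count_space UNIV)
        = (\<integral>\<^sup>+ vs. ennreal (open_prob \<mu> t (- g + w)) *
             (ennreal (walk_open_prob \<mu> t w vs) * indicator {ws. length ws = k} vs) \<partial>count_space UNIV)"
      by (rule nn_integral_cong)
         (simp add: f_def indicator_def ennreal_mult open_prob_nonneg walk_open_prob_nonneg t mult.assoc)
    then show "(\<integral>\<^sup>+ vs. f (w # vs) \<partial>count_space UNIV) = ennreal (open_prob \<mu> t (- g + w)) * ?Q ^ k"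
      by (simp add: nn_integral_cmult Suc.IH)
  qed
  also have "\<dots> = ?Q ^ Suc k"
    using nn_integral_count_space_translate[of "\<lambda>x. ennreal (open_prob \<mu> t x)" g]
    by (simp add: nn_integral_multc mult.commute)
  finally show ?case by (simp add: f_def)
qed

lemma nn_integral_walk_open_prob:
  assumes "0 \<le> t"
  shows "(\<integral>\<^sup>+ ws. ennreal (walk_open_prob \<mu> t g ws) \<partial>count_space UNIV)
      = (\<Sum>k. (\<integral>\<^sup>+ x. ennreal (open_prob \<mu> t x) \<partial>count_space UNIV) ^ k)"
proof -
  have "ennreal (walk_open_prob \<mu> t g ws)
      = (\<Sum>k. ennreal (walk_open_prob \<mu> t g ws) * indicator {ws. length ws = k} ws)" for ws
  proof -
    have "(\<lambda>k. ennreal (walk_open_prob \<mu> t g ws) * indicator {ws. length ws = k} ws)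
        = (\<lambda>k. if k = length ws then ennreal (walk_open_prob \<mu> t g ws) else 0)"
      by (auto simp: indicator_def)
    then show ?thesis
      using sums_single[of "length ws" "\<lambda>_. ennreal (walk_open_prob \<mu> t g ws)"]
      by (simp add: sums_iff)
  qed
  then have "(\<integral>\<^sup>+ ws. ennreal (walk_open_prob \<mu> t g ws) \<partial>count_space UNIV)
      = (\<Sum>k. \<integral>\<^sup>+ ws. ennreal (walk_open_prob \<mu> t g ws) * indicator {ws. length ws = k} ws \<partial>count_space UNIV)"
    by (simp add: nn_integral_suminf[symmetric])
  also have "\<dots> = (\<Sum>k. (\<integral>\<^sup>+ x. ennreal (open_prob \<mu> t x) \<partial>count_space UNIV) ^ k)"
    by (simp add: nn_integral_walk_open_prob_length[OF assms])
  finally show ?thesis .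
qed

lemma ennreal_suminf_power_less_top:
  fixes q :: ennreal
  assumes "q < 1"
  shows "(\<Sum>k. q ^ k) < \<top>"
proof -
  obtain x where x: "q = ennreal x" "0 \<le> x" "x < 1"
    using assms by (cases q rule: ennreal_cases) (auto simp: ennreal_less_iff)
  then have "(\<Sum>k. q ^ k) = ennreal (\<Sum>k. x ^ k)"
    by (simp add: ennreal_power suminf_ennreal2 summable_geometric)
  then show ?thesis by simp
qed

lemma borel_measurable_nn_integral_count_space:
  fixes f :: "'i \<Rightarrow> 'b \<Rightarrow> ennreal"
  assumes "countable (UNIV :: 'i set)" "infinite (UNIV :: 'i set)"
    and "\<And>i. f i \<in> borel_measurable M"
  shows "(\<lambda>x. \<integral>\<^sup>+ i. f i x \<partial>count_space UNIV) \<in> borel_measurable M"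
proof -
  note enum = bij_betw_from_nat_into[OF assms(1,2)]
  have "(\<lambda>x. \<integral>\<^sup>+ i. f i x \<partial>count_space UNIV) = (\<lambda>x. \<Sum>n. f (from_nat_into UNIV n) x)"
    by (simp add: nn_integral_bij_count_space[symmetric, OF enum] nn_integral_count_space_nat)
  moreover have "(\<lambda>x. \<Sum>n. f (from_nat_into UNIV n) x) \<in> borel_measurable M"
    using assms(3) by (intro borel_measurable_suminf_order) auto
  ultimately show ?thesis by simp
qed

definition open_walk_count :: "'a::group_add pmf \<Rightarrow> real \<Rightarrow> 'a \<Rightarrow> ('a set \<Rightarrow> nat) \<Rightarrow> ennreal" where
  "open_walk_count \<mu> t g \<omega> =
     (\<integral>\<^sup>+ ws. of_bool (distinct (g # ws)) * indicator (walk_open_event \<mu> t g ws) \<omega> \<partial>count_space UNIV)"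

lemma borel_measurable_open_walk_count:
  fixes \<mu> :: "'a::group_add pmf"
  assumes "countable (UNIV :: 'a set)"
  shows "open_walk_count \<mu> t g \<in> borel_measurable (multigraph_space \<mu> t)"
  unfolding open_walk_count_def
  using countable_lists[OF assms] infinite_UNIV_listI
  by (intro borel_measurable_nn_integral_count_space borel_measurable_times_ennreal
      borel_measurable_const borel_measurable_indicator walk_open_event_sets) simp_all

lemma nn_integral_open_walk_count_le:
  fixes \<mu> :: "'a::group_add pmf"
  assumes "countable (UNIV :: 'a set)" "\<mu> \<in> sym_measures" "0 \<le> t"
  shows "(\<integral>\<^sup>+ \<omega>. open_walk_count \<mu> t g \<omega> \<partial>multigraph_space \<mu> t)
      \<le> (\<Sum>k. (\<integral>\<^sup>+ x. ennreal (open_prob \<mu> t x) \<partial>count_space UNIV) ^ k)"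
proof -
  have lists: "countable (UNIV :: 'a list set)"
    using countable_lists[OF assms(1)] by simp
  have "(\<integral>\<^sup>+ \<omega>. open_walk_count \<mu> t g \<omega> \<partial>multigraph_space \<mu> t)
      = (\<integral>\<^sup>+ ws. \<integral>\<^sup>+ \<omega>. of_bool (distinct (g # ws)) * indicator (walk_open_event \<mu> t g ws) \<omega>
          \<partial>multigraph_space \<mu> t \<partial>count_space UNIV)"
    unfolding open_walk_count_def
    by (intro nn_integral_count_space_nn_integral[OF lists] borel_measurable_times_ennreal
        borel_measurable_const borel_measurable_indicator walk_open_event_sets)
  also have "\<dots> = (\<integral>\<^sup>+ ws. of_bool (distinct (g # ws)) * emeasure (multigraph_space \<mu> t) (walk_open_event \<mu> t g ws)
          \<partial>count_space UNIV)"
    by (intro nn_integral_cong nn_integral_cmult_indicator walk_open_event_sets)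
  also have "\<dots> \<le> (\<integral>\<^sup>+ ws. ennreal (walk_open_prob \<mu> t g ws) \<partial>count_space UNIV)"
    by (intro nn_integral_mono) (simp add: emeasure_walk_open_event[OF assms(2,3)])
  also have "\<dots> = (\<Sum>k. (\<integral>\<^sup>+ x. ennreal (open_prob \<mu> t x) \<partial>count_space UNIV) ^ k)"
    by (rule nn_integral_walk_open_prob[OF assms(3)])
  finally show ?thesis .
qed

text \<open>Each vertex of the component of \<open>g\<close> is the endpoint of an open self-avoiding walk from \<open>g\<close>.\<close>
lemma open_walk_count_eq_top_if_infinite_component:
  assumes "\<omega> \<in> space (multigraph_space \<mu> t)" "has_infinite_component \<omega>"
  obtains g where "open_walk_count \<mu> t g \<omega> = \<top>"
proof -
  obtain g where inf: "infinite {h. (g, h) \<in> (adjacent \<omega>)\<^sup>*}"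
    using assms(2) unfolding has_infinite_component_def by blast
  define X where "X = {ws. distinct (g # ws) \<and> \<omega> \<in> walk_open_event \<mu> t g ws}"
  have "{h. (g, h) \<in> (adjacent \<omega>)\<^sup>*} \<subseteq> (\<lambda>ws. last (g # ws)) ` X"
  proof
    fix h assume "h \<in> {h. (g, h) \<in> (adjacent \<omega>)\<^sup>*}"
    then have "(\<lambda>a b. (a, b) \<in> adjacent \<omega>)\<^sup>*\<^sup>* g h"
      by (simp add: rtranclp_rtrancl_eq)
    then obtain xs where "rtrancl_path (\<lambda>a b. (a, b) \<in> adjacent \<omega>) g xs h"
      by (auto simp: rtranclp_eq_rtrancl_path)
    then obtain ws where path: "rtrancl_path (\<lambda>a b. (a, b) \<in> adjacent \<omega>) g ws h"
      and "distinct (g # ws)"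
      by (rule rtrancl_path_distinct)
    then have "ws \<in> X"
      unfolding X_def using walk_open_event_if_path[OF assms(1)] by blast
    moreover have "last (g # ws) = h"
      using path by (induction rule: rtrancl_path.induct) auto
    ultimately show "h \<in> (\<lambda>ws. last (g # ws)) ` X" by blast
  qed
  then have "infinite X" using inf finite_surj by blast
  have "open_walk_count \<mu> t g \<omega> = (\<integral>\<^sup>+ ws. indicator X ws \<partial>count_space UNIV)"
    unfolding open_walk_count_def X_def by (intro nn_integral_cong) (simp add: indicator_def)
  also have "\<dots> = emeasure (count_space UNIV) X"
    by simp
  also have "\<dots> = \<top>" using \<open>infinite X\<close> by (simp add: emeasure_count_space_infinite)
  finally show ?thesis by (rule that)
qed

lemma measure_infinite_component_eq_0:
  fixes \<mu> :: "'a::group_add pmf"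
  assumes countable: "countable (UNIV :: 'a set)" and sym: "\<mu> \<in> sym_measures" and "0 \<le> t"
    and subcritical: "(\<integral>\<^sup>+ x. ennreal (open_prob \<mu> t x) \<partial>count_space UNIV) < 1"
  shows "measure (multigraph_space \<mu> t) {\<omega> \<in> space (multigraph_space \<mu> t). has_infinite_component \<omega>} = 0"
proof -
  let ?M = "multigraph_space \<mu> t"
  have "(\<integral>\<^sup>+ \<omega>. open_walk_count \<mu> t g \<omega> \<partial>?M) < \<top>" for g
    using nn_integral_open_walk_count_le[OF assms(1-3)] ennreal_suminf_power_less_top[OF subcritical]
    by (rule le_less_trans)
  then have finite_count: "AE \<omega> in ?M. open_walk_count \<mu> t g \<omega> \<noteq> \<top>" for g
    using nn_integral_PInf_AE[OF borel_measurable_open_walk_count[OF countable]] by (simp add: less_top)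
  have "AE \<omega> in ?M. \<not> has_infinite_component \<omega>"
    using AE_ball_countable'[OF finite_count countable]
  proof (rule AE_mp, intro AE_I2 impI notI)
    fix \<omega> assume "\<omega> \<in> space ?M" "has_infinite_component \<omega>"
      and "\<forall>g\<in>UNIV. open_walk_count \<mu> t g \<omega> \<noteq> \<top>"
    then show False
      using open_walk_count_eq_top_if_infinite_component by blast
  qed
  then show ?thesis
    by (simp add: measure_def emeasure_eq_0_AE)
qed

lemma lambda_c_ge_if_subcritical:
  fixes \<mu> :: "'a::group_add pmf"
  assumes "countable (UNIV :: 'a set)" "\<mu> \<in> sym_measures" "0 < t"
    and "(\<integral>\<^sup>+ x. ennreal (open_prob \<mu> t x) \<partial>count_space UNIV) < 1"
  shows "ereal t \<le> lambda_c \<mu>"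
  unfolding lambda_c_def
  using assms measure_infinite_component_eq_0[OF assms(1,2) _ assms(4)]
  by (intro Sup_upper) auto

section \<open>A lower bound for the critical intensity\<close>

lemma one_minus_exp_neg_le: "0 \<le> (a::real) \<Longrightarrow> a \<le> 2 \<Longrightarrow> 1 - exp (- a) \<le> a - a\<^sup>2 / 4"
proof -
  assume "0 \<le> a" "a \<le> 2"
  then have "(1 - a / of_nat 2) ^ 2 \<le> exp (- a)"
    by (intro exp_ge_one_minus_x_over_n_power_n) auto
  then show ?thesis by (simp add: power2_eq_square field_simps)
qed

lemma open_prob_plus_square_le:
  assumes "1 \<le> t" "t \<le> 2"
  shows "open_prob \<mu> t x + indicator B x * (pmf \<mu> x)\<^sup>2 / 4 \<le> t * pmf \<mu> x"
proof (cases "x \<in> B")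
  case True
  have "pmf \<mu> x \<le> t * pmf \<mu> x" using assms by (simp add: mult_le_cancel_right1)
  then have "(pmf \<mu> x)\<^sup>2 \<le> (t * pmf \<mu> x)\<^sup>2" by (intro power_mono) auto
  moreover have "t * pmf \<mu> x \<le> 2"
    using mult_mono[OF assms(2) pmf_le_1] by simp
  then have "1 - exp (- (t * pmf \<mu> x)) \<le> t * pmf \<mu> x - (t * pmf \<mu> x)\<^sup>2 / 4"
    using assms by (intro one_minus_exp_neg_le) auto
  moreover have "indicator B x * (pmf \<mu> x)\<^sup>2 / 4 = (pmf \<mu> x)\<^sup>2 / 4" using True by simp
  ultimately show ?thesis
    unfolding open_prob_def by linarith
next
  case False
  then show ?thesis using exp_ge_add_one_self[of "- (t * pmf \<mu> x)"] by (simp add: open_prob_def)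
qed

lemma nn_integral_open_prob_le:
  assumes B: "finite B" and "1 \<le> t" "t \<le> 2"
  shows "(\<integral>\<^sup>+ x. ennreal (open_prob \<mu> t x) \<partial>count_space UNIV) + ennreal (\<Sum>x\<in>B. (pmf \<mu> x)\<^sup>2 / 4)
      \<le> ennreal t"
proof -
  have "ennreal (\<Sum>x\<in>B. (pmf \<mu> x)\<^sup>2 / 4) = (\<integral>\<^sup>+ x. ennreal ((pmf \<mu> x)\<^sup>2 / 4) \<partial>count_space B)"
    using B by (simp add: nn_integral_count_space_finite)
  also have "\<dots> = (\<integral>\<^sup>+ x. ennreal (indicator B x * (pmf \<mu> x)\<^sup>2 / 4) \<partial>count_space UNIV)"
    by (subst nn_integral_count_space_indicator) (auto intro!: nn_integral_cong simp: indicator_def)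
  finally have "ennreal (\<Sum>x\<in>B. (pmf \<mu> x)\<^sup>2 / 4)
      = (\<integral>\<^sup>+ x. ennreal (indicator B x * (pmf \<mu> x)\<^sup>2 / 4) \<partial>count_space UNIV)" .
  then have "(\<integral>\<^sup>+ x. ennreal (open_prob \<mu> t x) \<partial>count_space UNIV) + ennreal (\<Sum>x\<in>B. (pmf \<mu> x)\<^sup>2 / 4)
      = (\<integral>\<^sup>+ x. ennreal (open_prob \<mu> t x + indicator B x * (pmf \<mu> x)\<^sup>2 / 4) \<partial>count_space UNIV)"
    using assms by (simp add: nn_integral_add[symmetric] open_prob_nonneg ennreal_plus[symmetric]
        del: ennreal_plus)
  also have "\<dots> \<le> (\<integral>\<^sup>+ x. ennreal t * ennreal (pmf \<mu> x) \<partial>count_space UNIV)"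
    using open_prob_plus_square_le[OF assms(2,3)] assms(2)
    by (intro nn_integral_mono) (simp add: ennreal_mult[symmetric])
  also have "\<dots> = ennreal t"
    by (simp add: nn_integral_cmult nn_integral_pmf_eq_1)
  finally show ?thesis .
qed

lemma sum_pmf_square_ge:
  assumes "finite B" "B \<noteq> {}"
  shows "(measure_pmf.prob \<mu> B)\<^sup>2 / real (card B) \<le> (\<Sum>x\<in>B. (pmf \<mu> x)\<^sup>2)"
proof -
  have "(measure_pmf.prob \<mu> B)\<^sup>2 = (\<Sum>x\<in>B. pmf \<mu> x)\<^sup>2"
    by (simp add: measure_measure_pmf_finite[OF assms(1)])
  also have "\<dots> \<le> (\<Sum>x\<in>B. (pmf \<mu> x)\<^sup>2) * card B"
    by (rule sum_squared_le_sum_of_squares)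
  finally show ?thesis
    using assms by (simp add: divide_le_eq)
qed

lemma lambda_c_ge_mass_of_finite_set:
  fixes \<mu> :: "'a::group_add pmf"
  assumes "countable (UNIV :: 'a set)" "\<mu> \<in> sym_measures" "finite B" "0 < measure_pmf.prob \<mu> B"
  shows "ereal (1 + (measure_pmf.prob \<mu> B)\<^sup>2 / (8 * real (card B))) \<le> lambda_c \<mu>"
proof -
  define d where "d = (measure_pmf.prob \<mu> B)\<^sup>2 / (8 * real (card B))"
  have "B \<noteq> {}" using assms(4) by auto
  then have "card B \<ge> 1" using assms(3) by (simp add: Suc_le_eq card_gt_0_iff)
  moreover have "(measure_pmf.prob \<mu> B)\<^sup>2 \<le> 1"
    by (intro power_le_one) auto
  ultimately have "0 < d" "d \<le> 1"
    using assms(4) unfolding d_def by (auto simp: field_simps)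
  let ?Q = "\<integral>\<^sup>+ x. ennreal (open_prob \<mu> (1 + d) x) \<partial>count_space UNIV"
  have "?Q + ennreal (\<Sum>x\<in>B. (pmf \<mu> x)\<^sup>2 / 4) \<le> ennreal (1 + d)"
    using \<open>0 < d\<close> \<open>d \<le> 1\<close> by (intro nn_integral_open_prob_le[OF assms(3)]) auto
  moreover have "2 * d \<le> (\<Sum>x\<in>B. (pmf \<mu> x)\<^sup>2 / 4)"
    using sum_pmf_square_ge[OF assms(3) \<open>B \<noteq> {}\<close>, of \<mu>] unfolding d_def
    by (simp add: sum_divide_distrib[symmetric] field_simps)
  ultimately have "?Q + ennreal (2 * d) \<le> ennreal (1 + d)"
    by (meson add_left_mono ennreal_leI order_trans)
  then have "?Q < 1"
    using \<open>0 < d\<close> by (cases ?Q rule: ennreal_cases)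
      (auto simp: ennreal_plus[symmetric] ennreal_le_iff ennreal_less_iff top_unique simp del: ennreal_plus)
  then show ?thesis
    using lambda_c_ge_if_subcritical[OF assms(1,2)] \<open>0 < d\<close> unfolding d_def by simp
qed

section \<open>Uniform tightness of exponentially decaying measures\<close>

lemma summable_powr_powr_mult:
  fixes r r' s s' :: real
  assumes "0 < r" "0 < r'" "r' < 1" "s < s'" "0 < s'"
  shows "summable (\<lambda>n::nat. r powr (real n powr s) * r' powr (real n powr s'))"
proof -
  define L where "L = ln r"
  define c where "c = - ln r'"
  define e where "e = s' - s"
  have "0 < c" "0 < e" using assms by (simp_all add: c_def e_def)
  have eq: "r powr (real n powr s) * r' powr (real n powr s')
      = exp (real n powr s' * (L * real n powr (- e) - c))" for n :: nat
  proof -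
    have "real n powr s = real n powr s' * real n powr (- e)"
      by (simp add: e_def powr_add[symmetric])
    then show ?thesis
      using assms by (simp add: powr_def L_def c_def exp_add[symmetric] algebra_simps)
  qed
  have "((\<lambda>n::nat. exp (real n powr s' * (L * real n powr (- e) - c)) * real n ^ 2) \<longlongrightarrow> 0) at_top"
    using \<open>0 < c\<close> \<open>0 < e\<close> \<open>0 < s'\<close> by real_asymp
  then have "eventually (\<lambda>n::nat. exp (real n powr s' * (L * real n powr (- e) - c)) * real n ^ 2 < 1) at_top"
    by (rule order_tendstoD(2)) simp
  then have "eventually (\<lambda>n::nat. norm (r powr (real n powr s) * r' powr (real n powr s'))
      \<le> inverse (real n ^ 2)) sequentially"
    using eventually_gt_at_top[of "0::nat"]
    by eventually_elim (simp add: eq field_simps)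
  then show ?thesis
    by (rule summable_comparison_test_ev) (rule inverse_power_summable, simp)
qed

lemma measure_pmf_sphere_le:
  assumes S: "finite S" "generates S" and \<mu>: "\<mu> \<in> exp_measures S s' r'"
  shows "measure_pmf.prob \<mu> {g. word_length S g = m} \<le> real (card (ball_X S m)) * r' powr (real m powr s')"
proof -
  let ?sphere = "{g. word_length S g = m}"
  have "?sphere \<subseteq> ball_X S m" unfolding ball_X_def by auto
  moreover have "finite (ball_X S m)" by (rule finite_ball_X[OF S])
  ultimately have "finite ?sphere" "card ?sphere \<le> card (ball_X S m)"
    by (auto intro: finite_subset card_mono)
  have "pmf \<mu> g \<le> r' powr (real m powr s')" if "g \<in> ?sphere" for g
  proof -
    have "pmf \<mu> g < r' powr (real (word_length S g) powr s')"
      using \<mu> unfolding exp_measures_def by blast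
    with that show ?thesis by simp
  qed
  then have "measure_pmf.prob \<mu> ?sphere \<le> real (card ?sphere) * r' powr (real m powr s')"
    using sum_mono[of ?sphere "pmf \<mu>" "\<lambda>_. r' powr (real m powr s')"]
    by (simp add: measure_measure_pmf_finite[OF \<open>finite ?sphere\<close>])
  also have "\<dots> \<le> real (card (ball_X S m)) * r' powr (real m powr s')"
    using \<open>card ?sphere \<le> card (ball_X S m)\<close> by (intro mult_right_mono) auto
  finally show ?thesis .
qed

lemma measure_pmf_compl_ball_X_le:
  assumes S: "finite S" "generates S" and \<mu>: "\<mu> \<in> exp_measures S s' r'"
    and growth: "\<And>n. 1 \<le> n \<Longrightarrow> real (card (ball_X S n)) \<le> b n"
    and summable: "summable (\<lambda>n. b n * r' powr (real n powr s'))"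
  shows "measure_pmf.prob \<mu> (- ball_X S N) \<le> (\<Sum>i. b (i + Suc N) * r' powr (real (i + Suc N) powr s'))"
proof -
  define sphere where "sphere i = {g. word_length S g = i + Suc N}" for i
  have sphere_le: "measure_pmf.prob \<mu> (sphere i) \<le> b (i + Suc N) * r' powr (real (i + Suc N) powr s')" for i
  proof -
    have "measure_pmf.prob \<mu> (sphere i)
        \<le> real (card (ball_X S (i + Suc N))) * r' powr (real (i + Suc N) powr s')"
      unfolding sphere_def by (rule measure_pmf_sphere_le[OF S \<mu>])
    also have "\<dots> \<le> b (i + Suc N) * r' powr (real (i + Suc N) powr s')"
      by (intro mult_right_mono growth) simp_all
    finally show ?thesis .
  qed
  have tail_summable: "summable (\<lambda>i. b (i + Suc N) * r' powr (real (i + Suc N) powr s'))"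
    using summable by (rule summable_ignore_initial_segment)
  have "- ball_X S N = (\<Union>i. sphere i)"
  proof (intro set_eqI iffI)
    fix g assume "g \<in> - ball_X S N"
    then have "word_length S g = (word_length S g - Suc N) + Suc N" by (simp add: ball_X_def)
    then show "g \<in> (\<Union>i. sphere i)" unfolding sphere_def by blast
  qed (auto simp: sphere_def ball_X_def)
  moreover have sphere_summable: "summable (\<lambda>i. measure_pmf.prob \<mu> (sphere i))"
    by (rule summable_comparison_test'[OF tail_summable]) (use sphere_le in simp)
  ultimately have "measure_pmf.prob \<mu> (- ball_X S N) \<le> (\<Sum>i. measure_pmf.prob \<mu> (sphere i))"
    by (auto intro: measure_pmf.finite_measure_subadditive_countably)
  also have "\<dots> \<le> (\<Sum>i. b (i + Suc N) * r' powr (real (i + Suc N) powr s'))"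
    by (intro suminf_le sphere_le sphere_summable tail_summable)
  finally show ?thesis .
qed

lemma exp_measures_tight:
  assumes S: "finite S" "generates S" and "0 < r" "0 < r'" "r' < 1" "s < s'" "0 < s'"
    and growth: "\<And>n. 1 \<le> n \<Longrightarrow> real (card (ball_X S n)) \<le> r powr (real n powr s)"
    and "0 < \<epsilon>"
  obtains N where "\<And>\<mu>. \<mu> \<in> exp_measures S s' r' \<Longrightarrow> 1 - \<epsilon> \<le> measure_pmf.prob \<mu> (ball_X S N)"
proof -
  define a where "a n = r powr (real n powr s) * r' powr (real n powr s')" for n :: nat
  have "summable a"
    unfolding a_def using assms by (intro summable_powr_powr_mult)
  then obtain N where N: "\<And>n. N \<le> n \<Longrightarrow> norm (\<Sum>i. a (i + n)) < \<epsilon>"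
    using suminf_exist_split[OF \<open>0 < \<epsilon>\<close>] by blast
  show ?thesis
  proof (rule that)
    fix \<mu> assume "\<mu> \<in> exp_measures S s' r'"
    then have "measure_pmf.prob \<mu> (- ball_X S N) \<le> (\<Sum>i. a (i + Suc N))"
      unfolding a_def using \<open>summable a\<close>[unfolded a_def]
      by (intro measure_pmf_compl_ball_X_le[OF S _ growth])
    also have "\<dots> < \<epsilon>"
      using N[of "Suc N"] by simp
    finally show "1 - \<epsilon> \<le> measure_pmf.prob \<mu> (ball_X S N)"
      using measure_pmf.prob_compl[of "ball_X S N" \<mu>] by (simp add: Compl_eq_Diff_UNIV)
  qed
qed

lemma INF_lambda_c_exp_measures_gt_1:
  assumes S: "finite S" "generates S" and "0 < r" "0 < r'" "r' < 1" "s < s'" "0 < s'"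
    and growth: "\<And>n. 1 \<le> n \<Longrightarrow> real (card (ball_X S n)) \<le> r powr (real n powr s)"
  shows "1 < (INF \<mu>\<in>exp_measures S s' r'. lambda_c \<mu>)"
proof -
  obtain N where N: "\<And>\<mu>. \<mu> \<in> exp_measures S s' r' \<Longrightarrow> 1 - 1 / 2 \<le> measure_pmf.prob \<mu> (ball_X S N)"
    using exp_measures_tight[OF assms, of "1 / 2"] by auto
  define K where "K = real (card (ball_X S N))"
  have "0 < K" unfolding K_def using card_ball_X_pos[OF S] by simp
  have "ereal (1 + 1 / (32 * K)) \<le> lambda_c \<mu>" if \<mu>: "\<mu> \<in> exp_measures S s' r'" for \<mu>
  proof -
    have "1 / 2 \<le> measure_pmf.prob \<mu> (ball_X S N)" using N[OF \<mu>] by simp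
    then have "(1 / 2)\<^sup>2 \<le> (measure_pmf.prob \<mu> (ball_X S N))\<^sup>2" by (intro power_mono) auto
    then have "1 + 1 / (32 * K) \<le> 1 + (measure_pmf.prob \<mu> (ball_X S N))\<^sup>2 / (8 * K)"
      using \<open>0 < K\<close> by (simp add: field_simps power2_eq_square)
    moreover have "ereal (1 + (measure_pmf.prob \<mu> (ball_X S N))\<^sup>2 / (8 * K)) \<le> lambda_c \<mu>"
      unfolding K_def using \<mu> \<open>1 / 2 \<le> measure_pmf.prob \<mu> (ball_X S N)\<close>
      by (intro lambda_c_ge_mass_of_finite_set countable_UNIV_if_generates[OF S] finite_ball_X[OF S])
        (auto simp: exp_measures_def)
    ultimately show ?thesis by (meson ereal_less_eq(3) order_trans)
  qed
  then have "ereal (1 + 1 / (32 * K)) \<le> (INF \<mu>\<in>exp_measures S s' r'. lambda_c \<mu>)"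
    by (rule INF_greatest)
  moreover have "1 < ereal (1 + 1 / (32 * K))" using \<open>0 < K\<close> by simp
  ultimately show ?thesis by (meson less_le_trans)
qed

theorem proposition5:
  fixes S :: "'a::group_add set" and r s :: real
  assumes "finite S" and "generates S"
    and "r > 0"
    and "\<forall>n::nat. n \<ge> 1 \<longrightarrow> real (card (ball_X S n)) < r powr (real n powr s)"
  shows "epdim S \<le> ereal s"
proof -
  have growth: "\<And>n. 1 \<le> n \<Longrightarrow> real (card (ball_X S n)) \<le> r powr (real n powr s)"
    using assms(4) by (simp add: less_imp_le)
  have "s' \<le> s" if "0 < s'" "0 < r'" "r' < 1" "(INF \<mu>\<in>exp_measures S s' r'. lambda_c \<mu>) = 1" for s' r'
  proof (rule ccontr)
    assume "\<not> s' \<le> s"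
    then have "1 < (INF \<mu>\<in>exp_measures S s' r'. lambda_c \<mu>)"
      using that(1-3) by (intro INF_lambda_c_exp_measures_gt_1[OF assms(1-3) _ _ _ _ growth]) auto
    then show False using that(4) by simp
  qed
  then show ?thesis
    unfolding epdim_def by (auto intro!: Sup_least)
qed

end
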